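(* For every LTL formula $\varphi$ (in negation normal form) and every $\star\in\{a,s\}$: (i) $\emptyset\models_\star\varphi$ (empty team property); (ii) if $T\models_\star\varphi$ and $T'\subseteq T$ then $T'\models_\star\varphi$ (downward closure); (iii) for every trace $t$, $\{t\}\models_\star\varphi$ iff $t\models\varphi$ in classical LTL semantics (singleton equivalence). Moreover, for the asynchronous semantics: (iv) if $T\models_a\varphi$ and $T'\models_a\varphi$ then $T\cup T'\models_a\varphi$ (union closure); (v) $T\models_a\varphi$ iff $\{t\}\models_a\varphi$ for all $t\in T$ (flatness); consequently $T\models_a\varphi$ iff $t\models\varphi$ for every $t\in T$. Finally, the synchronous semantics is neither union closed nor flat: for $T=\{\{p\}\emptyset^\omega\}$ and $T'=\{\emptyset\{p\}\emptyset^\omega\}$ one has $T\models_s F p$, $T'\models_s Fp$, but $T\cup T'\not\models_s Fp$.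
   Context: Fix a finite set $AP$ of atomic propositions. A trace is an infinite sequence $t=t(0)t(1)t(2)\cdots\in(2^{AP})^\omega$; for $i\ge 0$, $t[i,\infty)=t(i)t(i+1)\cdots$. A team is a (possibly empty, possibly infinite) set $T$ of traces; $T[i,\infty)=\{t[i,\infty):t\in T\}$, and for a function $k:T\to\mathbb N$, $T[k]=\{t[k(t),\infty):t\in T\}$. LTL formulas are given by $\varphi::=p\mid\neg p\mid\varphi\wedge\varphi\mid\varphi\vee\varphi\mid X\varphi\mid F\varphi\mid G\varphi\mid\varphi U\varphi\mid\varphi R\varphi$ with $p\in AP$; $t\models\varphi$ denotes the usual classical LTL semantics on a single trace. Team semantics $\models_\star$, $\star\in\{a,s\}$: $T\models_\star p$ iff $p\in t(0)$ for all $t\in T$; $T\models_\star\neg p$ iff $p\notin t(0)$ for all $t\in T$; $T\models_\star\psi\wedge\varphi$ iff $T\models_\star\psi$ and $T\models_\star\varphi$; $T\models_\star\psi\vee\varphi$ (splitjunction) iff there are $T_1,T_2$ with $T_1\cup T_2=T$, $T_1\models_\star\psi$, $T_2\models_\star\varphi$; $T\models_\star X\varphi$ iff $T[1,\infty)\models_\star\varphi$. Synchronous: $T\models_s F\varphi$ iff $\exists k\ge0$: $T[k,\infty)\models_s\varphi$; $T\models_s G\varphi$ iff $\forall k\ge0$: $T[k,\infty)\models_s\varphi$; $T\models_s\psi U\varphi$ iff $\exists k$: $T[k,\infty)\models_s\varphi$ and $\forall k'<k$: $T[k',\infty)\models_s\psi$; $T\models_s\psi R\varphi$ iff $\forall k$: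 $T[k,\infty)\models_s\varphi$ or $\exists k'<k$: $T[k',\infty)\models_s\psi$. Asynchronous (time advances independently on each trace): $T\models_a F\varphi$ iff there is $k:T\to\mathbb N$ with $T[k]\models_a\varphi$; $T\models_a G\varphi$ iff $T[k]\models_a\varphi$ for all $k:T\to\mathbb N$; $T\models_a\psi U\varphi$ iff there is $k:T\to\mathbb N$ with $T[k]\models_a\varphi$ such that, with $T_>=\{t\in T:k(t)>0\}$, for every $k':T_>\to\mathbb N$ with $k'(t)<k(t)$ for all $t\in T_>$, $\{t[k'(t),\infty):t\in T_>\}\models_a\psi$; $T\models_a\psi R\varphi$ iff for every $k:T\to\mathbb N$ there are $T_1\cup T_2=T$ with $\{t[k(t),\infty):t\in T_1\}\models_a\varphi$ and some $k':T_2\to\mathbb N$ with $k'(t)<k(t)$ for all $t\in T_2$ and $\{t[k'(t),\infty):t\in T_2\}\models_a\psi$. *)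

theory Defs
  imports Main
begin

type_synonym 'a trace = "nat \<Rightarrow> 'a set"
type_synonym 'a team = "'a trace set"

datatype 'a ltl =
    Prop 'a | NProp 'a
  | And "'a ltl" "'a ltl" | Or "'a ltl" "'a ltl"
  | Next "'a ltl" | Fin "'a ltl" | Glob "'a ltl"
  | Until "'a ltl" "'a ltl" | Release "'a ltl" "'a ltl"

definition suffix :: "nat \<Rightarrow> 'a trace \<Rightarrow> 'a trace" where
  "suffix i t = (\<lambda>n. t (n + i))"

definition tshift :: "nat \<Rightarrow> 'a team \<Rightarrow> 'a team" where
  "tshift i T = suffix i ` T"

definition ashift :: "('a trace \<Rightarrow> nat) \<Rightarrow> 'a team \<Rightarrow> 'a team" where
  "ashift k T = (\<lambda>t. suffix (k t) t) ` T"

fun ltl_sat :: "'a trace \<Rightarrow> 'a ltl \<Rightarrow> bool" where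
  "ltl_sat t (Prop p) = (p \<in> t 0)"
| "ltl_sat t (NProp p) = (p \<notin> t 0)"
| "ltl_sat t (And \<psi> \<phi>) = (ltl_sat t \<psi> \<and> ltl_sat t \<phi>)"
| "ltl_sat t (Or \<psi> \<phi>) = (ltl_sat t \<psi> \<or> ltl_sat t \<phi>)"
| "ltl_sat t (Next \<phi>) = ltl_sat (suffix 1 t) \<phi>"
| "ltl_sat t (Fin \<phi>) = (\<exists>k. ltl_sat (suffix k t) \<phi>)"
| "ltl_sat t (Glob \<phi>) = (\<forall>k. ltl_sat (suffix k t) \<phi>)"
| "ltl_sat t (Until \<psi> \<phi>) =
     (\<exists>k. ltl_sat (suffix k t) \<phi> \<and> (\<forall>k'<k. ltl_sat (suffix k' t) \<psi>))"
| "ltl_sat t (Release \<psi> \<phi>) =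
     (\<forall>k. ltl_sat (suffix k t) \<phi> \<or> (\<exists>k'<k. ltl_sat (suffix k' t) \<psi>))"

fun sync_sat :: "'a team \<Rightarrow> 'a ltl \<Rightarrow> bool" where
  "sync_sat T (Prop p) = (\<forall>t\<in>T. p \<in> t 0)"
| "sync_sat T (NProp p) = (\<forall>t\<in>T. p \<notin> t 0)"
| "sync_sat T (And \<psi> \<phi>) = (sync_sat T \<psi> \<and> sync_sat T \<phi>)"
| "sync_sat T (Or \<psi> \<phi>) =
     (\<exists>T1 T2. T1 \<union> T2 = T \<and> sync_sat T1 \<psi> \<and> sync_sat T2 \<phi>)"
| "sync_sat T (Next \<phi>) = sync_sat (tshift 1 T) \<phi>"
| "sync_sat T (Fin \<phi>) = (\<exists>k. sync_sat (tshift k T) \<phi>)"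
| "sync_sat T (Glob \<phi>) = (\<forall>k. sync_sat (tshift k T) \<phi>)"
| "sync_sat T (Until \<psi> \<phi>) =
     (\<exists>k. sync_sat (tshift k T) \<phi> \<and> (\<forall>k'<k. sync_sat (tshift k' T) \<psi>))"
| "sync_sat T (Release \<psi> \<phi>) =
     (\<forall>k. sync_sat (tshift k T) \<phi> \<or> (\<exists>k'<k. sync_sat (tshift k' T) \<psi>))"

text \<open>Asynchronous team semantics. Functions k : T \<rightarrow> \<nat> are represented by total
  functions on traces; only their values on T matter.\<close>
fun async_sat :: "'a team \<Rightarrow> 'a ltl \<Rightarrow> bool" where
  "async_sat T (Prop p) = (\<forall>t\<in>T. p \<in> t 0)"
| "async_sat T (NProp p) = (\<forall>t\<in>T. p \<notin> t 0)"
| "async_sat T (And \<psi> \<phi>) = (async_sat T \<psi> \<and> async_sat T \<phi>)"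
| "async_sat T (Or \<psi> \<phi>) =
     (\<exists>T1 T2. T1 \<union> T2 = T \<and> async_sat T1 \<psi> \<and> async_sat T2 \<phi>)"
| "async_sat T (Next \<phi>) = async_sat (tshift 1 T) \<phi>"
| "async_sat T (Fin \<phi>) = (\<exists>k. async_sat (ashift k T) \<phi>)"
| "async_sat T (Glob \<phi>) = (\<forall>k. async_sat (ashift k T) \<phi>)"
| "async_sat T (Until \<psi> \<phi>) =
     (\<exists>k. async_sat (ashift k T) \<phi> \<and>
        (\<forall>k'. (\<forall>t\<in>{t\<in>T. k t > 0}. k' t < k t) \<longrightarrow>
              async_sat (ashift k' {t\<in>T. k t > 0}) \<psi>))"
| "async_sat T (Release \<psi> \<phi>) =
     (\<forall>k. \<exists>T1 T2. T1 \<union> T2 = T \<and> async_sat (ashift k T1) \<phi> \<and>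
        (\<exists>k'. (\<forall>t\<in>T2. k' t < k t) \<and> async_sat (ashift k' T2) \<psi>))"

end

theory Submission
  imports Defs
begin

text \<open>In the asynchronous semantics the time shift k : T \<rightarrow> \<nat> is chosen independently on
  each trace, so by the axiom of choice every temporal operator decouples into a statement about
  single traces: a team satisfies \<phi> iff each of its traces satisfies \<phi> classically. Flatness gives
  the empty team property, downward and union closure, and singleton equivalence at once.
  In the synchronous semantics all traces share one time index; downward closure and singleton
  equivalence still hold by induction on \<phi>, but F p fails on a team whose traces see p at
  different times.\<close>

lemma tshift_singleton [simp]: "tshift k {t} = {suffix k t}"
  by (simp add: tshift_def)

lemma tshift_empty [simp]: "tshift k {} = {}"
  by (simp add: tshift_def)

lemma tshift_mono: "T' \<subseteq> T \<Longrightarrow> tshift k T' \<subseteq> tshift k T"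
  by (simp add: tshift_def image_mono)

lemma ball_tshift_iff [simp]: "(\<forall>s\<in>tshift k T. P s) \<longleftrightarrow> (\<forall>t\<in>T. P (suffix k t))"
  by (simp add: tshift_def)

lemma ball_ashift_iff [simp]: "(\<forall>s\<in>ashift k T. P s) \<longleftrightarrow> (\<forall>t\<in>T. P (suffix (k t) t))"
  by (simp add: ashift_def)

lemma ex_union_split_iff:
  "(\<exists>T1 T2. T1 \<union> T2 = T \<and> (\<forall>t\<in>T1. P t) \<and> (\<forall>t\<in>T2. Q t)) \<longleftrightarrow> (\<forall>t\<in>T. P t \<or> Q t)"
proof
  assume "\<forall>t\<in>T. P t \<or> Q t"
  then have "{t\<in>T. P t} \<union> {t\<in>T. \<not> P t} = T \<and> (\<forall>t\<in>{t\<in>T. P t}. P t) \<and> (\<forall>t\<in>{t\<in>T. \<not> P t}. Q t)"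
    by blast
  then show "\<exists>T1 T2. T1 \<union> T2 = T \<and> (\<forall>t\<in>T1. P t) \<and> (\<forall>t\<in>T2. Q t)"
    by blast
qed blast

lemma ex_fun_ball_iff: "(\<exists>k. \<forall>t\<in>T. R t (k t)) \<longleftrightarrow> (\<forall>t\<in>T. \<exists>n. R t n)"
  by (blast dest: bchoice)

lemma all_fun_ball_iff: "(\<forall>k. \<forall>t\<in>T. R t (k t)) \<longleftrightarrow> (\<forall>t\<in>T. \<forall>n. R t n)"
proof
  assume "\<forall>k. \<forall>t\<in>T. R t (k t)"
  then show "\<forall>t\<in>T. \<forall>n. R t n"
    by (auto dest: spec[where x = "\<lambda>_. n" for n])
qed blast

lemma all_bounded_fun_iff:
  fixes k :: "'a \<Rightarrow> nat"
  assumes "\<forall>t\<in>S. 0 < k t"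
  shows "(\<forall>k'. (\<forall>t\<in>S. k' t < k t) \<longrightarrow> (\<forall>t\<in>S. P t (k' t))) \<longleftrightarrow> (\<forall>t\<in>S. \<forall>j<k t. P t j)"
proof
  assume all: "\<forall>k'. (\<forall>t\<in>S. k' t < k t) \<longrightarrow> (\<forall>t\<in>S. P t (k' t))"
  show "\<forall>t\<in>S. \<forall>j<k t. P t j"
  proof (intro ballI allI impI)
    fix t j assume "t \<in> S" "j < k t"
    \<comment> \<open>Away from t any value below k works; positivity of k makes k - 1 such a value.\<close>
    with assms have "\<forall>s\<in>S. (if s = t then j else k s - 1) < k s"
      by auto
    with all \<open>t \<in> S\<close> show "P t j"
      by fastforce
  qed
qed blast

theorem async_sat_iff_ltl_sat: "async_sat T \<phi> \<longleftrightarrow> (\<forall>t\<in>T. ltl_sat t \<phi>)"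
proof (induction \<phi> arbitrary: T)
  case (Or \<psi> \<phi>)
  then show ?case
    by (simp add: ex_union_split_iff)
next
  case (Fin \<phi>)
  then show ?case
    using ex_fun_ball_iff by simp
next
  case (Glob \<phi>)
  then show ?case
    using all_fun_ball_iff by simp
next
  case (Until \<psi> \<phi>)
  have "async_sat T (Until \<psi> \<phi>) \<longleftrightarrow>
      (\<exists>k. (\<forall>t\<in>T. ltl_sat (suffix (k t) t) \<phi>) \<and>
           (\<forall>k'. (\<forall>t\<in>{t\<in>T. 0 < k t}. k' t < k t) \<longrightarrow>
                 (\<forall>t\<in>{t\<in>T. 0 < k t}. ltl_sat (suffix (k' t) t) \<psi>)))"
    by (simp only: async_sat.simps ball_ashift_iff Until.IH)
  also have "\<dots> \<longleftrightarrow>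
      (\<exists>k. (\<forall>t\<in>T. ltl_sat (suffix (k t) t) \<phi>) \<and>
           (\<forall>t\<in>{t\<in>T. 0 < k t}. \<forall>j<k t. ltl_sat (suffix j t) \<psi>))"
    by (intro ex_cong1 conj_cong refl all_bounded_fun_iff) simp
  also have "\<dots> \<longleftrightarrow>
      (\<exists>k. \<forall>t\<in>T. ltl_sat (suffix (k t) t) \<phi> \<and> (\<forall>j<k t. ltl_sat (suffix j t) \<psi>))"
    by auto
  finally show ?case
    using ex_fun_ball_iff by simp
next
  case (Release \<psi> \<phi>)
  have bounded_witness:
    "(\<exists>k'. (\<forall>t\<in>S. k' t < k t) \<and> (\<forall>t\<in>S. ltl_sat (suffix (k' t) t) \<psi>)) \<longleftrightarrow>
     (\<forall>t\<in>S. \<exists>j<k t. ltl_sat (suffix j t) \<psi>)" for S and k :: "'a trace \<Rightarrow> nat"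
    using ex_fun_ball_iff[of S "\<lambda>t j. j < k t \<and> ltl_sat (suffix j t) \<psi>"]
    by (simp add: ball_conj_distrib)
  have "async_sat T (Release \<psi> \<phi>) \<longleftrightarrow>
      (\<forall>k. \<forall>t\<in>T. ltl_sat (suffix (k t) t) \<phi> \<or> (\<exists>j<k t. ltl_sat (suffix j t) \<psi>))"
    using Release by (simp add: bounded_witness ex_union_split_iff)
  then show ?case
    using all_fun_ball_iff by simp
qed (simp_all add: ball_conj_distrib)

lemma sync_sat_empty: "sync_sat {} \<phi>"
proof (induction \<phi>)
  case (Or \<psi> \<phi>)
  then show ?case
    by (simp only: sync_sat.simps) blast
qed simp_all

lemma sync_sat_downward_closed: "sync_sat T \<phi> \<Longrightarrow> T' \<subseteq> T \<Longrightarrow> sync_sat T' \<phi>"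
proof (induction \<phi> arbitrary: T T')
  case (Or \<psi> \<phi>)
  then obtain T1 T2 where "T1 \<union> T2 = T" "sync_sat T1 \<psi>" "sync_sat T2 \<phi>"
    by auto
  with Or have "(T1 \<inter> T') \<union> (T2 \<inter> T') = T'" "sync_sat (T1 \<inter> T') \<psi>" "sync_sat (T2 \<inter> T') \<phi>"
    by auto
  then show ?case
    by (simp only: sync_sat.simps) blast
next
  case (Next \<phi>)
  have shift: "tshift 1 T' \<subseteq> tshift 1 T"
    using Next.prems(2) by (rule tshift_mono)
  show ?case
    using Next.prems(1) Next.IH[OF _ shift] by auto
next
  case (Fin \<phi>)
  have shift: "tshift k T' \<subseteq> tshift k T" for k
    using Fin.prems(2) by (rule tshift_mono)
  show ?case
    using Fin.prems(1) Fin.IH[OF _ shift] by auto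
next
  case (Glob \<phi>)
  have shift: "tshift k T' \<subseteq> tshift k T" for k
    using Glob.prems(2) by (rule tshift_mono)
  show ?case
    using Glob.prems(1) Glob.IH[OF _ shift] by auto
next
  case (Until \<psi> \<phi>)
  have shift: "tshift k T' \<subseteq> tshift k T" for k
    using Until.prems(2) by (rule tshift_mono)
  show ?case
    using Until.prems(1) Until.IH(1)[OF _ shift] Until.IH(2)[OF _ shift] by auto
next
  case (Release \<psi> \<phi>)
  have shift: "tshift k T' \<subseteq> tshift k T" for k
    using Release.prems(2) by (rule tshift_mono)
  show ?case
    using Release.prems(1) Release.IH(1)[OF _ shift] Release.IH(2)[OF _ shift] by auto
qed (simp, blast)+

lemma sync_sat_singleton_iff: "sync_sat {t} \<phi> \<longleftrightarrow> ltl_sat t \<phi>"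
proof (induction \<phi> arbitrary: t)
  case (Or \<psi> \<phi>)
  have "sync_sat {t} (Or \<psi> \<phi>) \<longleftrightarrow>
      (\<exists>T1 T2. T1 \<union> T2 = {t} \<and> sync_sat T1 \<psi> \<and> sync_sat T2 \<phi>)"
    by simp
  also have "\<dots> \<longleftrightarrow> sync_sat {t} \<psi> \<or> sync_sat {t} \<phi>"
  proof
    assume "\<exists>T1 T2. T1 \<union> T2 = {t} \<and> sync_sat T1 \<psi> \<and> sync_sat T2 \<phi>"
    then obtain T1 T2 where "T1 \<union> T2 = {t}" "sync_sat T1 \<psi>" "sync_sat T2 \<phi>"
      by blast
    then show "sync_sat {t} \<psi> \<or> sync_sat {t} \<phi>"
      by (metis Un_singleton_iff)
  next
    assume "sync_sat {t} \<psi> \<or> sync_sat {t} \<phi>"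
    then show "\<exists>T1 T2. T1 \<union> T2 = {t} \<and> sync_sat T1 \<psi> \<and> sync_sat T2 \<phi>"
      by (metis sup_bot.left_neutral sup_bot.right_neutral sync_sat_empty)
  qed
  finally show ?case
    using Or by simp
qed simp_all

lemma sync_sat_Fin_not_union_closed:
  fixes p :: 'a
  defines "t1 \<equiv> \<lambda>n. if n = 0 then {p} else {}"
    and "t2 \<equiv> \<lambda>n. if n = 1 then {p} else {}"
  shows "sync_sat {t1} (Fin (Prop p))" "sync_sat {t2} (Fin (Prop p))"
    and "\<not> sync_sat ({t1} \<union> {t2}) (Fin (Prop p))"
proof -
  show "sync_sat {t1} (Fin (Prop p))"
    by (auto simp: t1_def suffix_def intro!: exI[of _ 0])
  show "sync_sat {t2} (Fin (Prop p))"
    by (auto simp: t2_def suffix_def intro!: exI[of _ 1])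
  show "\<not> sync_sat ({t1} \<union> {t2}) (Fin (Prop p))"
  proof
    assume "sync_sat ({t1} \<union> {t2}) (Fin (Prop p))"
    then obtain k where "p \<in> t1 k" "p \<in> t2 k"
      by (auto simp: suffix_def)
    then show False
      by (simp add: t1_def t2_def split: if_splits)
  qed
qed

theorem mainTheorem1:
  fixes dummy :: "'a::finite"
  shows
   "(\<forall>\<phi>::'a ltl. sync_sat {} \<phi> \<and> async_sat {} \<phi>)
  \<and> (\<forall>(\<phi>::'a ltl) T T'. sync_sat T \<phi> \<and> T' \<subseteq> T \<longrightarrow> sync_sat T' \<phi>)
  \<and> (\<forall>(\<phi>::'a ltl) T T'. async_sat T \<phi> \<and> T' \<subseteq> T \<longrightarrow> async_sat T' \<phi>)
  \<and> (\<forall>(\<phi>::'a ltl) t. sync_sat {t} \<phi> \<longleftrightarrow> ltl_sat t \<phi>)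
  \<and> (\<forall>(\<phi>::'a ltl) t. async_sat {t} \<phi> \<longleftrightarrow> ltl_sat t \<phi>)
  \<and> (\<forall>(\<phi>::'a ltl) T T'. async_sat T \<phi> \<and> async_sat T' \<phi> \<longrightarrow> async_sat (T \<union> T') \<phi>)
  \<and> (\<forall>(\<phi>::'a ltl) T. async_sat T \<phi> \<longleftrightarrow> (\<forall>t\<in>T. async_sat {t} \<phi>))
  \<and> (\<forall>(\<phi>::'a ltl) T. async_sat T \<phi> \<longleftrightarrow> (\<forall>t\<in>T. ltl_sat t \<phi>))
  \<and> (\<forall>p::'a.
       let t1 = (\<lambda>n::nat. if n = 0 then {p} else {});
           t2 = (\<lambda>n::nat. if n = 1 then {p} else {})
       in sync_sat {t1} (Fin (Prop p)) \<and> sync_sat {t2} (Fin (Prop p))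
          \<and> \<not> sync_sat ({t1} \<union> {t2}) (Fin (Prop p)))"
proof -
  have counterexample:
    "let t1 = (\<lambda>n::nat. if n = 0 then {p} else {});
         t2 = (\<lambda>n::nat. if n = 1 then {p} else {})
     in sync_sat {t1} (Fin (Prop p)) \<and> sync_sat {t2} (Fin (Prop p))
        \<and> \<not> sync_sat ({t1} \<union> {t2}) (Fin (Prop p))" for p :: 'a
    unfolding Let_def by (intro conjI sync_sat_Fin_not_union_closed)
  show ?thesis
    unfolding async_sat_iff_ltl_sat
    using sync_sat_empty sync_sat_downward_closed sync_sat_singleton_iff counterexample
    by (intro conjI) blast+
qed

end
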